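(* With the notation of the context, every $\alpha$-communal $k$-tuple $\mathbf{g}$ can be written in exactly one way as \[ \mathbf{g}=\mathbf{b}(\mathbf{a})+\sum_{i=1}^k c_i\mathbf{x}_i \] with $\mathbf{a}\in\mathcal{A}$ and $c_1,\dots,c_k\in\mathbb{Z}_{\ge 0}$; moreover, for every $\mathbf{a}\in\mathcal{A}$ and all $c_i\in\mathbb{Z}_{\ge0}$ the right-hand side is an $\alpha$-communal $k$-tuple. Explicitly, if $\mathbf{g}=[g_1,\dots,g_k]$ with $g=\sum g_i$, then $a_j$ is the least nonnegative residue of $m_jg-n_jg_j$ modulo $A$ and $c_j=(m_jg-n_jg_j-a_j)/A$. Furthermore, the sum of the entries of $\mathbf{b}(\mathbf{a})$ equals $b(\mathbf{a})=\frac{N}{A}\sum_{i=1}^k\frac{a_i}{n_i}$.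
   Context: Let $k\ge 2$ and let $\alpha_1,\dots,\alpha_k$ be nonnegative rational numbers such that the sum of any $k-1$ of them is at most $1$ and $\sum_i\alpha_i>1$. A $k$-tuple $[g_1,\dots,g_k]$ of integers is called $\alpha$-communal if $0\le g_i\le \alpha_i\sum_{j=1}^k g_j$ for every $i$. Write $\alpha_i=m_i/n_i$ in lowest terms with $n_i\ge 1$. Set $N=\prod_{i=1}^k n_i$, $A=N(\sum_{i=1}^k\alpha_i-1)$ (a positive integer), and $\hat\alpha_i=1-\sum_{j\ne i}\alpha_j$. For each $i$ define $\mathbf{x}_i=\frac{N}{n_i}[\alpha_1,\dots,\alpha_{i-1},\hat\alpha_i,\alpha_{i+1},\dots,\alpha_k]$, i.e. the $k$-tuple whose $j$-th entry is $\frac{N}{n_i}\alpha_j$ for $j\ne i$ and whose $i$-th entry is $\frac{N}{n_i}\hat\alpha_i$. Let $\mathcal{A}$ be the set of integer $k$-tuples $\mathbf{a}=(a_1,\dots,a_k)$ with $0\le a_i<A$ for all $i$ such that for every $1\le j\le k$ the integer $N\hat\alpha_j\frac{a_j}{n_j}+N\alpha_j\sum_{i\ne j}\frac{a_i}{n_i}$ is divisible by $A$. For $\mathbf{a}\in\mathcal{A}$ let $\mathbf{b}(\mathbf{a})=[b_1,\dots,b_k]=\sum_{i=1}^k\frac{a_i}{A}\mathbf{x}_i$, i.e. $b_j=\frac1A\left(N\hat\alpha_j\frac{a_j}{n_j}+N\alpha_j\sum_{i\ne j}\frac{a_i}{n_i}\right)$. *)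

theory Defs
  imports Complex_Main
begin

text \<open>Tuples are indexed by 0..k-1 and represented as functions on nat; only
  the entries with index < k matter.\<close>

definition mnum :: "(nat \<Rightarrow> rat) \<Rightarrow> nat \<Rightarrow> int" where
  "mnum \<alpha> i = fst (quotient_of (\<alpha> i))"

definition nden :: "(nat \<Rightarrow> rat) \<Rightarrow> nat \<Rightarrow> int" where
  "nden \<alpha> i = snd (quotient_of (\<alpha> i))"

definition Nprod :: "nat \<Rightarrow> (nat \<Rightarrow> rat) \<Rightarrow> int" where
  "Nprod k \<alpha> = (\<Prod>i<k. nden \<alpha> i)"

text \<open>A = N (sum alpha - 1); under the hypotheses this rational is a positive integer,
  so taking the floor loses nothing.\<close>
definition Aint :: "nat \<Rightarrow> (nat \<Rightarrow> rat) \<Rightarrow> int" where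
  "Aint k \<alpha> = \<lfloor>of_int (Nprod k \<alpha>) * ((\<Sum>i<k. \<alpha> i) - 1)\<rfloor>"

definition alpha_hat :: "nat \<Rightarrow> (nat \<Rightarrow> rat) \<Rightarrow> nat \<Rightarrow> rat" where
  "alpha_hat k \<alpha> i = 1 - (\<Sum>j\<in>{..<k} - {i}. \<alpha> j)"

definition communal :: "nat \<Rightarrow> (nat \<Rightarrow> rat) \<Rightarrow> (nat \<Rightarrow> int) \<Rightarrow> bool" where
  "communal k \<alpha> g \<longleftrightarrow>
     (\<forall>i<k. 0 \<le> g i \<and> of_int (g i) \<le> \<alpha> i * of_int (\<Sum>j<k. g j))"

definition xvec :: "nat \<Rightarrow> (nat \<Rightarrow> rat) \<Rightarrow> nat \<Rightarrow> nat \<Rightarrow> rat" where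
  "xvec k \<alpha> i j = of_int (Nprod k \<alpha>) / of_int (nden \<alpha> i) *
      (if j = i then alpha_hat k \<alpha> i else \<alpha> j)"

definition bnum :: "nat \<Rightarrow> (nat \<Rightarrow> rat) \<Rightarrow> (nat \<Rightarrow> int) \<Rightarrow> nat \<Rightarrow> rat" where
  "bnum k \<alpha> a j = of_int (Nprod k \<alpha>) * alpha_hat k \<alpha> j * of_int (a j) / of_int (nden \<alpha> j)
     + of_int (Nprod k \<alpha>) * \<alpha> j * (\<Sum>i\<in>{..<k} - {j}. of_int (a i) / of_int (nden \<alpha> i))"

definition inA :: "nat \<Rightarrow> (nat \<Rightarrow> rat) \<Rightarrow> (nat \<Rightarrow> int) \<Rightarrow> bool" where
  "inA k \<alpha> a \<longleftrightarrow> (\<forall>i<k. 0 \<le> a i \<and> a i < Aint k \<alpha>) \<and>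
     (\<forall>j<k. \<exists>z::int. bnum k \<alpha> a j = of_int (Aint k \<alpha>) * of_int z)"

definition bvec :: "nat \<Rightarrow> (nat \<Rightarrow> rat) \<Rightarrow> (nat \<Rightarrow> int) \<Rightarrow> nat \<Rightarrow> rat" where
  "bvec k \<alpha> a j = bnum k \<alpha> a j / of_int (Aint k \<alpha>)"

definition repr :: "nat \<Rightarrow> (nat \<Rightarrow> rat) \<Rightarrow> (nat \<Rightarrow> int) \<Rightarrow> (nat \<Rightarrow> int) \<Rightarrow> nat \<Rightarrow> rat" where
  "repr k \<alpha> a c j = bvec k \<alpha> a j + (\<Sum>i<k. of_int (c i) * xvec k \<alpha> i j)"

end

theory Submission
  imports Defs
begin

(* For an integer tuple g with entry sum s, the "slack" of coordinate j is
   t_j = m_j s - n_j g_j = n_j (alpha_j s - g_j), so g is alpha-communal iff g >= 0 and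
   every slack is >= 0.  Conversely every integer vector t determines the rational tuple
     from_slack(t)_j = (N alpha_j / A) W(t) - t_j / n_j,   W(t) = sum_i t_i / n_i,
   whose entry sum is (N/A) W(t) and whose slacks are t again; thus g <-> slack(g) is a
   bijection.  The key computation is that b(a) + sum_i c_i x_i = from_slack(a + A c).
   Hence writing g = b(a) + sum c_i x_i with 0 <= a_i < A amounts to dividing each
   slack t_j with remainder by A, which gives existence and uniqueness; nonnegative
   slacks yield nonnegative entries (using alpha >= 0 and the bound on k-1 of the
   alpha's), which gives the converse; and the sum formula for b(a) is the entry-sum
   formula for from_slack(a).  Integrality of b(a) comes from the divisibility
   condition defining the set A, and integrality of the x_i from N being divisible
   by every n_i. *)

lemma nden_pos: "nden \<alpha> i > 0"
  unfolding nden_def by (rule quotient_of_denom_pos')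

lemma nden_nonzero: "(of_int (nden \<alpha> i) :: rat) \<noteq> 0"
  using nden_pos[of \<alpha> i] by simp

lemma alpha_eq_frac: "\<alpha> i = of_int (mnum \<alpha> i) / of_int (nden \<alpha> i)"
  unfolding mnum_def nden_def by (metis prod.collapse quotient_of_div)

lemma Nprod_pos: "Nprod k \<alpha> > 0"
  unfolding Nprod_def by (rule prod_pos) (simp add: nden_pos)

lemma sum_remove_index: "i < (k::nat) \<Longrightarrow> (\<Sum>j\<in>{..<k} - {i}. f j) = (\<Sum>j<k. f j) - (f i :: rat)"
  by (simp add: sum_diff1)

lemma Nprod_split: "i < k \<Longrightarrow> Nprod k \<alpha> = nden \<alpha> i * (\<Prod>j\<in>{..<k} - {i}. nden \<alpha> j)"
  unfolding Nprod_def by (simp add: prod.remove)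

lemma Nprod_alpha_int: "i < k \<Longrightarrow> of_int (Nprod k \<alpha>) * \<alpha> i
   = of_int (mnum \<alpha> i * (\<Prod>j\<in>{..<k} - {i}. nden \<alpha> j))"
proof -
  assume i: "i < k"
  show ?thesis
    by (subst Nprod_split[OF i], subst alpha_eq_frac[of \<alpha> i]) (use nden_pos[of \<alpha> i] in \<open>simp add: field_simps\<close>)
qed

lemma Nprod_div_alpha_Ints:
  assumes "i < k" "j < k" "i \<noteq> j"
  shows "of_int (Nprod k \<alpha>) / of_int (nden \<alpha> i) * \<alpha> j \<in> \<int>"
proof -
  have "(\<Prod>l\<in>{..<k} - {j}. nden \<alpha> l) = nden \<alpha> i * (\<Prod>l\<in>{..<k} - {j} - {i}. nden \<alpha> l)"
    using assms by (subst prod.remove[of _ i]) auto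
  then have "of_int (Nprod k \<alpha>) / of_int (nden \<alpha> i) * \<alpha> j
     = (of_int (mnum \<alpha> j * (\<Prod>l\<in>{..<k} - {j} - {i}. nden \<alpha> l)) :: rat)"
    using Nprod_alpha_int[OF assms(2), of \<alpha>] nden_nonzero[of \<alpha> i] by (simp add: field_simps)
  then show ?thesis by (metis Ints_of_int)
qed

lemma Aint_eq: "of_int (Aint k \<alpha>) = of_int (Nprod k \<alpha>) * ((\<Sum>i<k. \<alpha> i) - 1)"
proof -
  have "of_int (Nprod k \<alpha>) * (\<Sum>i<k. \<alpha> i)
      = (\<Sum>i<k. of_int (mnum \<alpha> i * (\<Prod>j\<in>{..<k} - {i}. nden \<alpha> j)) :: rat)"
    unfolding sum_distrib_left by (rule sum.cong) (auto simp: Nprod_alpha_int)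
  then have "of_int (Nprod k \<alpha>) * ((\<Sum>i<k. \<alpha> i) - 1)
     = (of_int ((\<Sum>i<k. mnum \<alpha> i * (\<Prod>j\<in>{..<k} - {i}. nden \<alpha> j)) - Nprod k \<alpha>) :: rat)"
    by (simp add: algebra_simps)
  then show ?thesis unfolding Aint_def by (simp only: floor_of_int)
qed

lemma alpha_hat_eq: "j < k \<Longrightarrow> alpha_hat k \<alpha> j = 1 - (\<Sum>i<k. \<alpha> i) + \<alpha> j"
  unfolding alpha_hat_def by (simp add: sum_remove_index)

lemma xvec_eq: "j < k \<Longrightarrow> xvec k \<alpha> i j = of_int (Nprod k \<alpha>) * \<alpha> j / of_int (nden \<alpha> i)
   - (if j = i then of_int (Aint k \<alpha>) / of_int (nden \<alpha> i) else 0)"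
  unfolding xvec_def Aint_eq using nden_nonzero[of \<alpha> i] by (auto simp: alpha_hat_eq field_simps)

lemma xvec_Ints: assumes i: "i < k" and j: "j < k" shows "xvec k \<alpha> i j \<in> \<int>"
proof (cases "j = i")
  case True
  have "xvec k \<alpha> i i = of_int (Nprod k \<alpha>) / of_int (nden \<alpha> i)
      - (\<Sum>l\<in>{..<k} - {i}. of_int (Nprod k \<alpha>) / of_int (nden \<alpha> i) * \<alpha> l)"
    unfolding xvec_def alpha_hat_def by (simp add: right_diff_distrib sum_distrib_left)
  moreover have "of_int (Nprod k \<alpha>) / of_int (nden \<alpha> i) = (of_int (\<Prod>l\<in>{..<k} - {i}. nden \<alpha> l) :: rat)"
    using Nprod_split[OF i, of \<alpha>] nden_nonzero[of \<alpha> i] by simp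
  moreover have "(\<Sum>l\<in>{..<k} - {i}. of_int (Nprod k \<alpha>) / of_int (nden \<alpha> i) * \<alpha> l) \<in> \<int>"
    by (rule Ints_sum, rule Nprod_div_alpha_Ints) (use i in auto)
  ultimately show ?thesis using True by (metis Ints_diff Ints_of_int)
next
  case False
  then show ?thesis using Nprod_div_alpha_Ints[OF i j] unfolding xvec_def by auto
qed

definition wsum :: "nat \<Rightarrow> (nat \<Rightarrow> rat) \<Rightarrow> (nat \<Rightarrow> int) \<Rightarrow> rat" where
  "wsum k \<alpha> t = (\<Sum>i<k. of_int (t i) / of_int (nden \<alpha> i))"

definition slack :: "nat \<Rightarrow> (nat \<Rightarrow> rat) \<Rightarrow> (nat \<Rightarrow> int) \<Rightarrow> nat \<Rightarrow> int" where
  "slack k \<alpha> g j = mnum \<alpha> j * (\<Sum>l<k. g l) - nden \<alpha> j * g j"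

text \<open>The tuple whose slacks are t (see from_slack_slack and slack_from_slack).\<close>
definition from_slack :: "nat \<Rightarrow> (nat \<Rightarrow> rat) \<Rightarrow> (nat \<Rightarrow> int) \<Rightarrow> nat \<Rightarrow> rat" where
  "from_slack k \<alpha> t j = of_int (Nprod k \<alpha>) * \<alpha> j / of_int (Aint k \<alpha>) * wsum k \<alpha> t
     - of_int (t j) / of_int (nden \<alpha> j)"

lemma wsum_linear: "wsum k \<alpha> (\<lambda>i. a i + A * c i) = wsum k \<alpha> a + of_int A * wsum k \<alpha> c"
  unfolding wsum_def by (simp add: sum.distrib sum_distrib_left add_divide_distrib)

lemma slack_div_nden: "of_int (slack k \<alpha> g j) / of_int (nden \<alpha> j)
   = \<alpha> j * of_int (\<Sum>l<k. g l) - (of_int (g j) :: rat)"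
  unfolding slack_def using nden_nonzero[of \<alpha> j] by (simp add: alpha_eq_frac[of \<alpha> j] field_simps)

lemma communal_iff_slack:
  "communal k \<alpha> g \<longleftrightarrow> (\<forall>i<k. 0 \<le> g i \<and> 0 \<le> slack k \<alpha> g i)"
proof -
  have "of_int (g i) \<le> \<alpha> i * of_int (\<Sum>j<k. g j) \<longleftrightarrow> 0 \<le> slack k \<alpha> g i" for i
  proof -
    have "0 \<le> slack k \<alpha> g i \<longleftrightarrow> 0 \<le> (of_int (slack k \<alpha> g i) / of_int (nden \<alpha> i) :: rat)"
      using nden_pos[of \<alpha> i] by (simp add: zero_le_divide_iff)
    then show ?thesis unfolding slack_div_nden by simp
  qed
  then show ?thesis unfolding communal_def by blast
qed

lemma sum_xvec: "j < k \<Longrightarrow> (\<Sum>i<k. of_int (c i) * xvec k \<alpha> i j)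
   = of_int (Nprod k \<alpha>) * \<alpha> j * wsum k \<alpha> c - of_int (Aint k \<alpha>) * of_int (c j) / of_int (nden \<alpha> j)"
proof -
  assume j: "j < k"
  have "(\<Sum>i<k. of_int (c i) * xvec k \<alpha> i j) =
     (\<Sum>i<k. of_int (Nprod k \<alpha>) * \<alpha> j * (of_int (c i) / of_int (nden \<alpha> i))
      - (if i = j then of_int (Aint k \<alpha>) * of_int (c i) / of_int (nden \<alpha> i) else 0))"
    by (rule sum.cong) (auto simp: xvec_eq j nden_nonzero field_simps)
  then show ?thesis using j by (simp add: sum_subtractf sum_distrib_left wsum_def)
qed

context
  fixes k :: nat and \<alpha> :: "nat \<Rightarrow> rat"
  assumes alpha_sum_gt_1: "(\<Sum>i<k. \<alpha> i) > 1"
begin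

lemma Aint_pos: "Aint k \<alpha> > 0"
proof -
  have "(0::rat) < of_int (Nprod k \<alpha>) * ((\<Sum>i<k. \<alpha> i) - 1)"
    using Nprod_pos[of k \<alpha>] alpha_sum_gt_1 by simp
  then show ?thesis using Aint_eq[of k \<alpha>] by simp
qed

lemma Aint_nonzero: "(of_int (Aint k \<alpha>) :: rat) \<noteq> 0"
  using Aint_pos by simp

lemma bvec_from_slack: "j < k \<Longrightarrow> bvec k \<alpha> a j = from_slack k \<alpha> a j"
proof -
  assume j: "j < k"
  have "bnum k \<alpha> a j = of_int (Nprod k \<alpha>) * \<alpha> j * wsum k \<alpha> a
     - of_int (Aint k \<alpha>) * of_int (a j) / of_int (nden \<alpha> j)"
    unfolding bnum_def Aint_eq wsum_def using j nden_nonzero[of \<alpha> j]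
    by (simp add: sum_remove_index alpha_hat_eq field_simps)
  then show ?thesis unfolding bvec_def from_slack_def using Aint_nonzero by (simp add: field_simps)
qed

lemma repr_from_slack: "j < k \<Longrightarrow> repr k \<alpha> a c j = from_slack k \<alpha> (\<lambda>i. a i + Aint k \<alpha> * c i) j"
  unfolding repr_def from_slack_def wsum_linear
  using Aint_nonzero nden_nonzero[of \<alpha> j]
  by (simp add: bvec_from_slack sum_xvec from_slack_def field_simps)

text \<open>The entry sum of from_slack(t) is (N/A) W(t), because N sum alpha = A + N.\<close>
lemma sum_from_slack: "(\<Sum>j<k. from_slack k \<alpha> t j) = of_int (Nprod k \<alpha>) / of_int (Aint k \<alpha>) * wsum k \<alpha> t"
proof -
  have NS: "of_int (Nprod k \<alpha>) * (\<Sum>j<k. \<alpha> j) = of_int (Aint k \<alpha>) + of_int (Nprod k \<alpha>)"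
    using Aint_eq by (simp add: algebra_simps)
  have "(\<Sum>j<k. of_int (Nprod k \<alpha>) * \<alpha> j / of_int (Aint k \<alpha>) * wsum k \<alpha> t)
      = of_int (Nprod k \<alpha>) * (\<Sum>j<k. \<alpha> j) / of_int (Aint k \<alpha>) * wsum k \<alpha> t"
    by (simp add: sum_distrib_right sum_distrib_left sum_divide_distrib)
  then have "(\<Sum>j<k. from_slack k \<alpha> t j)
      = of_int (Nprod k \<alpha>) * (\<Sum>j<k. \<alpha> j) / of_int (Aint k \<alpha>) * wsum k \<alpha> t - wsum k \<alpha> t"
    unfolding from_slack_def sum_subtractf by (simp add: wsum_def)
  then show ?thesis unfolding NS using Aint_nonzero by (simp add: field_simps)
qed

lemma slack_from_slack: "\<alpha> j * (\<Sum>i<k. from_slack k \<alpha> t i) - from_slack k \<alpha> t j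
   = of_int (t j) / of_int (nden \<alpha> j)"
  unfolding sum_from_slack by (simp add: from_slack_def)

lemma from_slack_slack: "j < k \<Longrightarrow> from_slack k \<alpha> (slack k \<alpha> g) j = of_int (g j)"
proof -
  assume j: "j < k"
  let ?s = "of_int (\<Sum>l<k. g l) :: rat"
  have "wsum k \<alpha> (slack k \<alpha> g) = (\<Sum>i<k. \<alpha> i * ?s - of_int (g i))"
    unfolding wsum_def slack_div_nden ..
  also have "\<dots> = ((\<Sum>i<k. \<alpha> i) - 1) * ?s"
    by (simp add: sum_subtractf sum_distrib_right algebra_simps)
  finally have W: "wsum k \<alpha> (slack k \<alpha> g) = ((\<Sum>i<k. \<alpha> i) - 1) * ?s" .
  have "of_int (Nprod k \<alpha>) * \<alpha> j / of_int (Aint k \<alpha>) * wsum k \<alpha> (slack k \<alpha> g)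
      = \<alpha> j * ?s * (of_int (Nprod k \<alpha>) * ((\<Sum>i<k. \<alpha> i) - 1) / of_int (Aint k \<alpha>))"
    unfolding W by simp
  also have "\<dots> = \<alpha> j * ?s"
    unfolding Aint_eq[symmetric] using Aint_nonzero by simp
  finally have "of_int (Nprod k \<alpha>) * \<alpha> j / of_int (Aint k \<alpha>) * wsum k \<alpha> (slack k \<alpha> g) = \<alpha> j * ?s" .
  then show ?thesis unfolding from_slack_def slack_div_nden by simp
qed

lemma slack_unique:
  assumes g: "\<forall>j<k. of_int (g j) = from_slack k \<alpha> t j" and j: "j < k"
  shows "t j = slack k \<alpha> g j"
proof -
  have "of_int (\<Sum>l<k. g l) = (\<Sum>l<k. from_slack k \<alpha> t l)"
    unfolding of_int_sum using g by simp
  then have "(of_int (t j) :: rat) / of_int (nden \<alpha> j) = \<alpha> j * of_int (\<Sum>l<k. g l) - of_int (g j)"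
    using slack_from_slack[of j t] g j by simp
  then have "(of_int (t j) :: rat) / of_int (nden \<alpha> j) = of_int (slack k \<alpha> g j) / of_int (nden \<alpha> j)"
    unfolding slack_div_nden .
  then show ?thesis using nden_nonzero[of \<alpha> j] by simp
qed

lemma repr_Ints: "inA k \<alpha> a \<Longrightarrow> j < k \<Longrightarrow> repr k \<alpha> a c j \<in> \<int>"
  unfolding repr_def inA_def bvec_def using Aint_nonzero xvec_Ints
  by (auto intro!: Ints_add Ints_sum Ints_mult)

lemma decomposition_exists:
  assumes g: "communal k \<alpha> g"
  defines "a \<equiv> \<lambda>j. slack k \<alpha> g j mod Aint k \<alpha>" and "c \<equiv> \<lambda>j. slack k \<alpha> g j div Aint k \<alpha>"
  shows "inA k \<alpha> a \<and> (\<forall>i<k. 0 \<le> c i) \<and> (\<forall>j<k. of_int (g j) = repr k \<alpha> a c j)"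
proof -
  have rep: "\<forall>j<k. of_int (g j) = repr k \<alpha> a c j"
    by (simp add: repr_from_slack a_def c_def from_slack_slack)
  have c_nonneg: "\<forall>i<k. 0 \<le> c i"
    using g Aint_pos unfolding communal_iff_slack c_def by (simp add: pos_imp_zdiv_nonneg_iff)
  have "\<exists>z. bnum k \<alpha> a j = of_int (Aint k \<alpha>) * of_int z" if j: "j < k" for j
  proof -
    have "bvec k \<alpha> a j = of_int (g j) - (\<Sum>i<k. of_int (c i) * xvec k \<alpha> i j)"
      using rep j unfolding repr_def by simp
    also have "\<dots> \<in> \<int>" using xvec_Ints j by (intro Ints_diff Ints_sum Ints_mult) auto
    finally obtain z where "bvec k \<alpha> a j = of_int z" by (auto elim: Ints_cases)
    then show ?thesis unfolding bvec_def using Aint_nonzero by (auto simp: field_simps)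
  qed
  then have "inA k \<alpha> a" unfolding inA_def using Aint_pos by (simp add: a_def)
  then show ?thesis using rep c_nonneg by blast
qed

text \<open>Uniqueness: a + A c must be the slack vector, and 0 <= a < A fixes a and c.\<close>
lemma decomposition_unique:
  assumes a: "\<forall>i<k. 0 \<le> a i \<and> a i < Aint k \<alpha>"
    and g: "\<forall>j<k. of_int (g j) = repr k \<alpha> a c j" and i: "i < k"
  shows "a i = slack k \<alpha> g i mod Aint k \<alpha> \<and> c i = slack k \<alpha> g i div Aint k \<alpha>"
proof -
  have "slack k \<alpha> g i = a i + Aint k \<alpha> * c i"
    using slack_unique[of g "\<lambda>i. a i + Aint k \<alpha> * c i"] g i by (simp add: repr_from_slack)
  then show ?thesis using a i Aint_pos by simp
qed

lemma bvec_sum: "(\<Sum>j<k. bvec k \<alpha> a j) = of_int (Nprod k \<alpha>) / of_int (Aint k \<alpha>) * wsum k \<alpha> a"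
  by (simp add: bvec_from_slack sum_from_slack)

end

context
  fixes k :: nat and \<alpha> :: "nat \<Rightarrow> rat"
  assumes alpha_nonneg: "\<forall>i<k. 0 \<le> \<alpha> i"
    and sum_but_one_le_1: "\<forall>i<k. (\<Sum>j\<in>{..<k} - {i}. \<alpha> j) \<le> 1"
    and alpha_sum_gt_1: "(\<Sum>i<k. \<alpha> i) > 1"
begin

text \<open>Nonnegative slacks give nonnegative entries: with Q the sum of the other alphas and
  R = W(t) - t_j/n_j, the entry is (N/A)(alpha_j R + (1 - Q) t_j/n_j).\<close>
lemma from_slack_nonneg:
  assumes t: "\<forall>i<k. 0 \<le> t i" and j: "j < k"
  shows "0 \<le> from_slack k \<alpha> t j"
proof -
  let ?r = "of_int (t j) / of_int (nden \<alpha> j) :: rat"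
  let ?R = "\<Sum>i\<in>{..<k} - {j}. of_int (t i) / of_int (nden \<alpha> i) :: rat"
  let ?Q = "\<Sum>l\<in>{..<k} - {j}. \<alpha> l"
  have A: "of_int (Aint k \<alpha>) = of_int (Nprod k \<alpha>) * (\<alpha> j + ?Q - 1)"
    using Aint_eq sum_remove_index[OF j, of \<alpha>] by simp
  have W: "wsum k \<alpha> t = ?r + ?R"
    unfolding wsum_def using sum_remove_index[OF j, of "\<lambda>i. of_int (t i) / of_int (nden \<alpha> i)"] by simp
  have "of_int (Nprod k \<alpha>) * \<alpha> j * (?r + ?R) - ?r * of_int (Aint k \<alpha>)
      = of_int (Nprod k \<alpha>) * (\<alpha> j * ?R + (1 - ?Q) * ?r)"
    unfolding A by (simp add: algebra_simps)
  then have e: "from_slack k \<alpha> t j = of_int (Nprod k \<alpha>) / of_int (Aint k \<alpha>) * (\<alpha> j * ?R + (1 - ?Q) * ?r)"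
    unfolding from_slack_def W using Aint_nonzero[OF alpha_sum_gt_1] by (simp add: field_simps)
  have "0 \<le> ?R" using t nden_pos[of \<alpha>] by (intro sum_nonneg divide_nonneg_pos) auto
  moreover have "0 \<le> ?r" using t j nden_pos[of \<alpha> j] by auto
  moreover have "0 \<le> 1 - ?Q" using sum_but_one_le_1 j by auto
  moreover have "0 \<le> (of_int (Nprod k \<alpha>) :: rat) / of_int (Aint k \<alpha>)"
    using Aint_pos[OF alpha_sum_gt_1] Nprod_pos[of k \<alpha>] by auto
  moreover have "0 \<le> \<alpha> j" using alpha_nonneg j by auto
  ultimately show ?thesis unfolding e by (intro mult_nonneg_nonneg add_nonneg_nonneg) auto
qed

lemma repr_communal:
  assumes a: "inA k \<alpha> a" and c: "\<forall>i<k. 0 \<le> c i"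
  shows "\<exists>g. communal k \<alpha> g \<and> (\<forall>j<k. of_int (g j) = repr k \<alpha> a c j)"
proof -
  define g where "g = (\<lambda>j. \<lfloor>repr k \<alpha> a c j\<rfloor>)"
  define t where "t = (\<lambda>i. a i + Aint k \<alpha> * c i)"
  have g_repr: "\<forall>j<k. of_int (g j) = repr k \<alpha> a c j"
    using repr_Ints[OF alpha_sum_gt_1 a] unfolding g_def by (metis Ints_cases floor_of_int)
  then have g_from: "\<forall>j<k. of_int (g j) = from_slack k \<alpha> t j"
    by (simp add: repr_from_slack[OF alpha_sum_gt_1] t_def)
  have t: "\<forall>i<k. 0 \<le> t i"
    using a c Aint_pos[OF alpha_sum_gt_1] unfolding inA_def t_def by auto
  have "0 \<le> g i \<and> 0 \<le> slack k \<alpha> g i" if i: "i < k" for i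
  proof
    have "(0::rat) \<le> of_int (g i)" using g_from t from_slack_nonneg i by simp
    then show "0 \<le> g i" by simp
    show "0 \<le> slack k \<alpha> g i" using slack_unique[OF alpha_sum_gt_1 g_from i] t i by auto
  qed
  then have "communal k \<alpha> g" unfolding communal_iff_slack by blast
  then show ?thesis using g_repr by blast
qed

end

theorem mainTheorem7:
  fixes k :: nat and \<alpha> :: "nat \<Rightarrow> rat"
  assumes "k \<ge> 2"
    and "\<forall>i<k. 0 \<le> \<alpha> i"
    and "\<forall>i<k. (\<Sum>j\<in>{..<k} - {i}. \<alpha> j) \<le> 1"
    and "(\<Sum>i<k. \<alpha> i) > 1"
  shows
    "(\<forall>g. communal k \<alpha> g \<longrightarrow>
        (let s = (\<Sum>j<k. g j);
             a = (\<lambda>j. (mnum \<alpha> j * s - nden \<alpha> j * g j) mod Aint k \<alpha>);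
             c = (\<lambda>j. (mnum \<alpha> j * s - nden \<alpha> j * g j - a j) div Aint k \<alpha>)
         in inA k \<alpha> a \<and> (\<forall>i<k. 0 \<le> c i) \<and>
            (\<forall>j<k. of_int (g j) = repr k \<alpha> a c j) \<and>
            (\<forall>a' c'. inA k \<alpha> a' \<and> (\<forall>i<k. 0 \<le> c' i) \<and>
                 (\<forall>j<k. of_int (g j) = repr k \<alpha> a' c' j) \<longrightarrow>
                 (\<forall>i<k. a' i = a i \<and> c' i = c i))))
     \<and> (\<forall>a c. inA k \<alpha> a \<and> (\<forall>i<k. 0 \<le> c i) \<longrightarrow>
          (\<exists>g. communal k \<alpha> g \<and> (\<forall>j<k. of_int (g j) = repr k \<alpha> a c j)))
     \<and> (\<forall>a. inA k \<alpha> a \<longrightarrow>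
          (\<Sum>j<k. bvec k \<alpha> a j) =
            of_int (Nprod k \<alpha>) / of_int (Aint k \<alpha>) * (\<Sum>i<k. of_int (a i) / of_int (nden \<alpha> i)))"
proof -
  have quotient_eq: "(t - t mod A) div A = t div A" for t A :: int
    by (simp add: minus_mod_eq_mult_div)
  have unique: "\<forall>i<k. a' i = slack k \<alpha> g i mod Aint k \<alpha> \<and> c' i = slack k \<alpha> g i div Aint k \<alpha>"
    if "inA k \<alpha> a'" "\<forall>j<k. of_int (g j) = repr k \<alpha> a' c' j" for g a' c'
    using decomposition_unique[OF assms(4)] that unfolding inA_def by blast
  show ?thesis
    unfolding Let_def slack_def[symmetric] quotient_eq wsum_def[symmetric]
    using decomposition_exists[OF assms(4)] unique repr_communal[OF assms(2-4)]
      bvec_sum[OF assms(4)]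
    by blast
qed

end
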